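(* Let $P$ be a Poisson tensor on $\mathbb{R}^3$, let $H\in C^\infty(\mathbb{R}^3)$, let $S\in C^\infty(\mathbb{R}^3)$ satisfy $PdS=0$, and let $g$ be the symmetric tensor with components $g^{ij}=H^iH^j-\delta^{ij}\sum_k H^kH^k$. Define the vector fields $\xi_P=PdH$ and $\xi=PdH+gdS$. Then at every regular point $x$ of $P$ (i.e. every $x$ with $P(x)\neq 0$), $\xi_P(x)=0$ if and only if $\xi(x)=0$.
   Context: $\mathbb{R}^3$ carries the standard Euclidean metric, used to identify tangent and cotangent spaces with $\mathbb{R}^3$; $H^i=H_i=\partial H/\partial x^i$ in standard coordinates. A Poisson tensor is a skew-symmetric bivector field satisfying the Jacobi identity; a point $x$ is regular for $P$ if the rank of $P$ at $x$ is maximal, which in $\mathbb{R}^3$ means $P(x)\neq 0$. *)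

theory Defs
  imports "HOL-Analysis.Analysis"
begin

definition partial :: "3 \<Rightarrow> (real^3 \<Rightarrow> real) \<Rightarrow> real^3 \<Rightarrow> real" where
  "partial i f x = frechet_derivative f (at x) (axis i 1)"

fun Ck :: "nat \<Rightarrow> (real^3 \<Rightarrow> real) \<Rightarrow> bool" where
  "Ck 0 f = continuous_on UNIV f"
| "Ck (Suc n) f = (f differentiable_on UNIV \<and> (\<forall>i. Ck n (partial i f)))"

definition smooth :: "(real^3 \<Rightarrow> real) \<Rightarrow> bool" where
  "smooth f \<longleftrightarrow> (\<forall>n. Ck n f)"

text \<open>Euclidean gradient (identification of dH with a vector via the standard metric).\<close>
definition grad :: "(real^3 \<Rightarrow> real) \<Rightarrow> real^3 \<Rightarrow> real^3" where
  "grad f x = (\<chi> i. partial i f x)"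

definition poisson_tensor :: "(real^3 \<Rightarrow> real^3^3) \<Rightarrow> bool" where
  "poisson_tensor P \<longleftrightarrow>
     (\<forall>i j. smooth (\<lambda>x. P x $ i $ j)) \<and>
     (\<forall>x i j. P x $ i $ j = - (P x $ j $ i)) \<and>
     (\<forall>x i j k. (\<Sum>l\<in>UNIV.
          P x $ i $ l * partial l (\<lambda>y. P y $ j $ k) x
        + P x $ j $ l * partial l (\<lambda>y. P y $ k $ i) x
        + P x $ k $ l * partial l (\<lambda>y. P y $ i $ j) x) = 0)"

definition gmet :: "(real^3 \<Rightarrow> real) \<Rightarrow> real^3 \<Rightarrow> real^3^3" where
  "gmet H x = (\<chi> i j. partial i H x * partial j H x
       - (if i = j then 1 else 0) * (\<Sum>k\<in>UNIV. partial k H x * partial k H x))"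

end

theory Submission
  imports Defs
begin

text \<open>At a point \<open>x\<close>, the skew matrix \<open>P x\<close> acts as \<open>v \<mapsto> p \<times> v\<close> for its axial vector \<open>p \<noteq> 0\<close>,
  and \<open>g v = h \<times> (h \<times> v)\<close> with \<open>h = \<nabla>H(x)\<close>. The hypothesis \<open>P dS = 0\<close> makes \<open>s = \<nabla>S(x)\<close>
  a multiple \<open>\<lambda> p\<close> of \<open>p\<close>, so with \<open>w = p \<times> h\<close> we get \<open>\<xi> = w - \<lambda> (h \<times> w)\<close>. If \<open>\<xi> = 0\<close>
  then \<open>w = \<lambda> (h \<times> w)\<close> is orthogonal to itself, hence \<open>\<xi>\<^sub>P = w = 0\<close>.\<close>

unbundle cross3_syntax

definition axial :: "real^3^3 \<Rightarrow> real^3" where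
  "axial A = vector [A $ 3 $ 2, A $ 1 $ 3, A $ 2 $ 1]"

lemma skew_diag_eq_0:
  fixes A :: "real^3^3"
  assumes "\<And>i j. A $ i $ j = - (A $ j $ i)"
  shows "A $ i $ i = 0"
  using assms[of i i] by simp

lemma skew_matrix_vector_mult_eq_cross:
  fixes A :: "real^3^3"
  assumes skew: "\<And>i j. A $ i $ j = - (A $ j $ i)"
  shows "A *v v = axial A \<times> v"
  using skew_diag_eq_0[OF skew] skew[of 1 2] skew[of 1 3] skew[of 2 3]
  by (simp add: axial_def vec_eq_iff forall_3 matrix_vector_mult_def sum_3 cross_components
      algebra_simps)

lemma skew_axial_eq_0_iff:
  fixes A :: "real^3^3"
  assumes skew: "\<And>i j. A $ i $ j = - (A $ j $ i)"
  shows "axial A = 0 \<longleftrightarrow> A = 0"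
  using skew_diag_eq_0[OF skew] skew[of 1 2] skew[of 1 3] skew[of 2 3]
  by (auto simp add: axial_def vec_eq_iff forall_3)

lemma gmet_mult_eq_double_cross: "gmet H x *v v = grad H x \<times> (grad H x \<times> v)"
  by (simp add: gmet_def grad_def vec_eq_iff forall_3 matrix_vector_mult_def sum_3
      cross_components algebra_simps)

lemma cross_eq_0_imp_parallel:
  fixes p s :: "real^3"
  assumes "p \<noteq> 0" and "p \<times> s = 0"
  shows "s = ((p \<bullet> s) / (p \<bullet> p)) *\<^sub>R p"
proof -
  have "p \<bullet> p \<noteq> 0" using \<open>p \<noteq> 0\<close> by simp
  moreover have "(p \<bullet> p) *\<^sub>R s = (p \<bullet> s) *\<^sub>R p"
    using Lagrange[of p p s] \<open>p \<times> s = 0\<close> by simp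
  ultimately show ?thesis
    by (metis (no_types, lifting) divide_inverse_commute scaleR_scaleR right_inverse scaleR_one)
qed

lemma cross_eq_0_iff_add_double_cross_eq_0:
  fixes p s h :: "real^3"
  assumes "p \<noteq> 0" and "p \<times> s = 0"
  shows "p \<times> h = 0 \<longleftrightarrow> p \<times> h + h \<times> (h \<times> s) = 0"
proof -
  obtain l where s: "s = l *\<^sub>R p"
    using cross_eq_0_imp_parallel[OF assms] by blast
  define w where "w = p \<times> h"
  have sum_eq: "p \<times> h + h \<times> (h \<times> s) = w - l *\<^sub>R (h \<times> w)"
    unfolding s w_def by (metis cross_mult_right cross_skew cross_minus_right diff_conv_add_uminus)
  show ?thesis
  proof
    assume "p \<times> h + h \<times> (h \<times> s) = 0"
    then have "w = l *\<^sub>R (h \<times> w)"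
      unfolding sum_eq by simp
    then have "w \<bullet> w = l * (w \<bullet> (h \<times> w))"
      by (metis inner_scaleR_right)
    then have "w \<bullet> w = 0"
      by (simp add: dot_cross_self)
    then show "p \<times> h = 0"
      unfolding w_def by simp
  next
    assume "p \<times> h = 0"
    then show "p \<times> h + h \<times> (h \<times> s) = 0"
      unfolding sum_eq w_def by simp
  qed
qed

theorem mainTheorem3:
  fixes P :: "real^3 \<Rightarrow> real^3^3" and H S :: "real^3 \<Rightarrow> real" and x :: "real^3"
  assumes "poisson_tensor P"
    and "smooth H" and "smooth S"
    and "\<forall>y. P y *v grad S y = 0"
    and "P x \<noteq> 0"
  shows "(P x *v grad H x = 0) \<longleftrightarrow> (P x *v grad H x + gmet H x *v grad S x = 0)"
proof -
  have skew: "\<And>i j. P x $ i $ j = - (P x $ j $ i)"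
    using assms(1) unfolding poisson_tensor_def by blast
  have "axial (P x) \<noteq> 0"
    using assms(5) skew_axial_eq_0_iff[OF skew] by blast
  moreover have "axial (P x) \<times> grad S x = 0"
    using assms(4) skew_matrix_vector_mult_eq_cross[OF skew] by metis
  ultimately show ?thesis
    unfolding skew_matrix_vector_mult_eq_cross[OF skew] gmet_mult_eq_double_cross
    by (rule cross_eq_0_iff_add_double_cross_eq_0)
qed

end
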